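(* Let $F\colon V(a,b,r_1,r_2,n)\to W$ belong to $D_{\beta,p}$ with $\beta>1$ and $p\ge1$. Then there exist $r_1',r_2'>0$ such that $V(a,b,r_1',r_2',n)\subset F(V(a,b,r_1,r_2,n))$, and the restriction of $F^{-1}$ to $V(a,b,r_1',r_2',n)$ belongs to $D_{\beta,p}$.
   Context: $V(a,b,r_1,r_2,n)=\{(x,y)\in\mathbb{C}^*\times\mathbb{C}^n:a<\arg x<b,|x|<r_1,|y|<r_2\}$ for $-\pi\le a<b\le\pi$ (with no argument condition when $(a,b)=(-\pi,\pi)$). A $C^\infty$ map $f$ on such a set is of order $(\alpha,p)$ if for each $0\le k\le p$ and each partial derivative $g$ of order $k$ (real coordinates), $|x|^{k-\alpha}g(x,y)$ is bounded on the intersection of the domain with some neighborhood of the origin of $\mathbb{C}^{n+1}$. A $C^\infty$ diffeomorphism $F\colon V(a,b,r_1,r_2,n)\to W$ onto an open set $W\subset\mathbb{C}^{n+1}$ belongs to $D_{\beta,p}$ ($\beta>1$) if $x\circ F\equiv x$ and $F-\mathrm{id}$ is of order $(\beta,p)$. *)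

theory Defs
  imports "HOL-Analysis.Analysis"
begin

text \<open>Points of C x C^n are pairs (x, y) with x :: complex and y :: complex ^ 'n.
  Real coordinates are given by the Basis of this euclidean space.\<close>

type_synonym 'n pt = "complex \<times> (complex ^ 'n)"

definition Vdom :: "real \<Rightarrow> real \<Rightarrow> real \<Rightarrow> real \<Rightarrow> 'n::finite pt set" where
  "Vdom a b r1 r2 = {(x, y). x \<noteq> 0 \<and>
      (if a = - pi \<and> b = pi then True else a < Arg x \<and> Arg x < b) \<and>
      norm x < r1 \<and> norm y < r2}"

fun partials :: "nat \<Rightarrow> ('a::euclidean_space \<Rightarrow> 'b::real_normed_vector) \<Rightarrow> ('a \<Rightarrow> 'b) set" where
  "partials 0 f = {f}"
| "partials (Suc k) f =
     {(\<lambda>z. frechet_derivative g (at z) i) | g i. g \<in> partials k f \<and> i \<in> Basis}"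

definition smooth_on :: "'a::euclidean_space set \<Rightarrow> ('a \<Rightarrow> 'b::real_normed_vector) \<Rightarrow> bool" where
  "smooth_on S f \<longleftrightarrow> (\<forall>k. \<forall>g \<in> partials k f. g differentiable_on S)"

definition of_order :: "'n::finite pt set \<Rightarrow> real \<Rightarrow> nat \<Rightarrow> ('n pt \<Rightarrow> 'n pt) \<Rightarrow> bool" where
  "of_order D \<alpha> p f \<longleftrightarrow> smooth_on D f \<and>
     (\<forall>k \<le> p. \<forall>g \<in> partials k f. \<exists>\<delta> > 0. \<exists>C. \<forall>z \<in> D.
        norm z < \<delta> \<longrightarrow> norm (fst z) powr (real k - \<alpha>) * norm (g z) \<le> C)"

definition smooth_diffeo :: "'a::euclidean_space set \<Rightarrow> 'a set \<Rightarrow> ('a \<Rightarrow> 'a) \<Rightarrow> bool" where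
  "smooth_diffeo D W F \<longleftrightarrow> open W \<and> F ` D = W \<and> inj_on F D \<and>
     smooth_on D F \<and> smooth_on W (inv_into D F)"

definition D_class :: "real \<Rightarrow> nat \<Rightarrow> 'n::finite pt set \<Rightarrow> ('n pt \<Rightarrow> 'n pt) \<Rightarrow> bool" where
  "D_class \<beta> p D F \<longleftrightarrow> (\<exists>W. smooth_diffeo D W F) \<and>
     (\<forall>z \<in> D. fst (F z) = fst z) \<and> of_order D \<beta> p (\<lambda>z. F z - z)"

end

theory Submission
  imports Defs
begin

text \<open>Write \<open>F = id + \<phi>\<close>. Since \<open>F\<close> preserves \<open>x\<close> and \<open>D\<phi> = O(|x|\<^bsup>\<beta>-1\<^esup>)\<close> is small near the
  origin, on each fibre \<open>x = const\<close> the map \<open>y \<mapsto> y' - \<phi>\<^sub>y(x, y)\<close> is a contraction of a small ball, so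
  \<open>F\<close> covers a smaller sector. The inverse is \<open>G = id + \<psi>\<close> with \<open>\<psi> = -\<phi> \<circ> G\<close>; differentiating gives
  \<open>D\<psi> = -(D\<phi> \<circ> G)(I + D\<psi>)\<close>, and since the coefficients \<open>D\<phi> \<circ> G\<close> are small the \<open>D\<psi>\<close> term on the
  right can be absorbed. By induction on the order of differentiation, every \<open>k\<close>-th partial of \<open>\<psi>\<close> is
  \<open>O(|x|\<^bsup>\<beta>-k\<^esup>)\<close>, as for \<open>\<phi>\<close>.\<close>

definition partial_deriv :: "('a::euclidean_space \<Rightarrow> 'b::real_normed_vector) \<Rightarrow> 'a \<Rightarrow> 'a \<Rightarrow> 'b" where
  "partial_deriv f i = (\<lambda>z. frechet_derivative f (at z) i)"

definition order_bounded :: "'n::finite pt set \<Rightarrow> real \<Rightarrow> ('n pt \<Rightarrow> 'b::real_normed_vector) \<Rightarrow> bool" where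
  "order_bounded U m g \<longleftrightarrow> (\<exists>\<delta>>0. \<exists>C. \<forall>z\<in>U. norm z < \<delta> \<longrightarrow> norm (fst z) powr (- m) * norm (g z) \<le> C)"

text \<open>\<open>order_on True U m q f\<close>: \<open>f\<close> is of order \<open>(m, q)\<close> on \<open>U\<close>, except that smoothness is weakened to
  differentiability of the partials up to order \<open>q\<close>; \<open>order_on False\<close> drops the growth bounds, so
  smoothness is \<open>order_on False\<close> at every \<open>q\<close>. Recursing through first partials makes the closure
  properties provable by induction on \<open>q\<close>.\<close>
fun order_on :: "bool \<Rightarrow> 'n::finite pt set \<Rightarrow> real \<Rightarrow> nat \<Rightarrow> ('n pt \<Rightarrow> 'b::real_normed_vector) \<Rightarrow> bool" where
  "order_on b U m 0 f \<longleftrightarrow> f differentiable_on U \<and> (b \<longrightarrow> order_bounded U m f)"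
| "order_on b U m (Suc q) f \<longleftrightarrow> f differentiable_on U \<and> (b \<longrightarrow> order_bounded U m f) \<and>
     (\<forall>i\<in>Basis. order_on b U (m-1) q (partial_deriv f i))"

lemma partials_Suc_partial_deriv: "partials (Suc k) f = (\<Union>i\<in>Basis. partials k (partial_deriv f i))"
proof (induction k)
  case 0 then show ?case by (auto simp: partial_deriv_def)
next
  case (Suc k)
  have "partials (Suc (Suc k)) f = {(\<lambda>z. frechet_derivative g (at z) i) | g i. g \<in> partials (Suc k) f \<and> i \<in> Basis}"
    by simp
  also have "\<dots> = (\<Union>j\<in>Basis. partials (Suc k) (partial_deriv f j))"
    unfolding Suc by auto
  finally show ?case .
qed

lemma order_on_iff_partials:
  "order_on b U m q f \<longleftrightarrow>
    (\<forall>k\<le>q. \<forall>g\<in>partials k f. g differentiable_on U \<and> (b \<longrightarrow> order_bounded U (m - real k) g))"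
proof (induction q arbitrary: m f)
  case 0 then show ?case by simp
next
  case (Suc q)
  show ?case
  proof
    assume H: "order_on b U m (Suc q) f"
    show "\<forall>k\<le>Suc q. \<forall>g\<in>partials k f. g differentiable_on U \<and> (b \<longrightarrow> order_bounded U (m - real k) g)"
    proof (intro allI impI ballI)
      fix k g assume k: "k \<le> Suc q" and g: "g \<in> partials k f"
      show "g differentiable_on U \<and> (b \<longrightarrow> order_bounded U (m - real k) g)"
      proof (cases k)
        case 0 then show ?thesis using H g by auto
      next
        case (Suc k')
        then obtain i where i: "i \<in> Basis" "g \<in> partials k' (partial_deriv f i)"
          using g partials_Suc_partial_deriv by blast
        have "order_on b U (m-1) q (partial_deriv f i)" using H i by auto
        then have "g differentiable_on U \<and> (b \<longrightarrow> order_bounded U (m - 1 - real k') g)"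
          using Suc.IH k Suc i by auto
        then show ?thesis using Suc by (simp add: algebra_simps)
      qed
    qed
  next
    assume H: "\<forall>k\<le>Suc q. \<forall>g\<in>partials k f. g differentiable_on U \<and> (b \<longrightarrow> order_bounded U (m - real k) g)"
    have "f differentiable_on U \<and> (b \<longrightarrow> order_bounded U m f)" using H[rule_format, of 0 f] by simp
    moreover have "order_on b U (m-1) q (partial_deriv f i)" if i: "i \<in> Basis" for i
    proof -
      have "\<forall>k\<le>q. \<forall>g\<in>partials k (partial_deriv f i). g differentiable_on U \<and> (b \<longrightarrow> order_bounded U (m - 1 - real k) g)"
      proof (intro allI impI ballI)
        fix k g assume "k \<le> q" "g \<in> partials k (partial_deriv f i)"
        moreover have "g \<in> partials (Suc k) f"
          unfolding partials_Suc_partial_deriv using i \<open>g \<in> partials k (partial_deriv f i)\<close> by blast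
        ultimately have "Suc k \<le> Suc q" "g \<in> partials (Suc k) f" by auto
        then show "g differentiable_on U \<and> (b \<longrightarrow> order_bounded U (m - 1 - real k) g)"
          using H by (fastforce simp: algebra_simps)
      qed
      then show ?thesis using Suc.IH by blast
    qed
    ultimately show "order_on b U m (Suc q) f" by simp
  qed
qed

lemma smooth_on_iff_order_on: "smooth_on U f \<longleftrightarrow> (\<forall>q. order_on False U m q f)"
  unfolding smooth_on_def order_on_iff_partials by blast

lemma of_order_iff_order_on: "of_order D \<alpha> p f \<longleftrightarrow> smooth_on D f \<and> order_on True D \<alpha> p f"
  unfolding of_order_def order_on_iff_partials order_bounded_def by (auto simp: smooth_on_def minus_diff_eq)

lemma differentiable_on_cong:
  assumes "open U" "\<And>z. z \<in> U \<Longrightarrow> f z = g z" "f differentiable_on U"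
  shows "g differentiable_on U"
  using assms unfolding differentiable_on_eq_differentiable_at[OF assms(1)] differentiable_def
  by (meson has_derivative_transform_within_open)

lemma partial_deriv_cong:
  assumes "open U" "\<And>z. z \<in> U \<Longrightarrow> f z = g z" "f differentiable_on U" "z \<in> U"
  shows "partial_deriv f i z = partial_deriv g i z"
  unfolding partial_deriv_def
  using assms frechet_derivative_transform_within_open[of f z U g]
  by (simp add: differentiable_on_eq_differentiable_at)

lemma order_bounded_cong: "(\<And>z. z \<in> U \<Longrightarrow> f z = g z) \<Longrightarrow> order_bounded U m f \<Longrightarrow> order_bounded U m g"
  unfolding order_bounded_def by metis

lemma order_on_cong:
  assumes "open U" "\<And>z. z \<in> U \<Longrightarrow> f z = g z" "order_on b U m q f"
  shows "order_on b U m q g"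
  using assms(2,3)
proof (induction q arbitrary: m f g)
  case 0 then show ?case using differentiable_on_cong[OF assms(1)] order_bounded_cong by (metis order_on.simps(1))
next
  case (Suc q)
  have d: "f differentiable_on U" using Suc by simp
  have "order_on b U (m-1) q (partial_deriv g i)" if "i \<in> Basis" for i
    using Suc.IH[of "partial_deriv f i" "partial_deriv g i"] partial_deriv_cong[OF assms(1) Suc.prems(1) d]
      Suc.prems that by auto
  then show ?case
    using differentiable_on_cong[OF assms(1) Suc.prems(1)] order_bounded_cong[OF Suc.prems(1)] Suc.prems(2)
    by auto
qed

lemma order_on_SucI:
  assumes "open U" "f differentiable_on U" "b \<Longrightarrow> order_bounded U m f"
    "\<And>i. i\<in>Basis \<Longrightarrow> \<exists>h. (\<forall>z\<in>U. partial_deriv f i z = h z) \<and> order_on b U (m-1) q h"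
  shows "order_on b U m (Suc q) f"
  using assms order_on_cong[OF assms(1)] by (metis order_on.simps(2))

lemma order_on_differentiable: "order_on b U m q f \<Longrightarrow> f differentiable_on U"
  by (cases q) auto

lemma order_on_bounded: "order_on True U m q f \<Longrightarrow> order_bounded U m f"
  by (cases q) auto

lemma order_on_partial: "order_on b U m (Suc q) f \<Longrightarrow> i \<in> Basis \<Longrightarrow> order_on b U (m-1) q (partial_deriv f i)"
  by auto

lemma order_on_mono_degree:
  assumes "q' \<le> q" "order_on b U m q f" shows "order_on b U m q' f"
  unfolding order_on_iff_partials
proof (intro allI impI ballI)
  fix k g assume "k \<le> q'" "g \<in> partials k f"
  then show "g differentiable_on U \<and> (b \<longrightarrow> order_bounded U (m - real k) g)"
    using assms unfolding order_on_iff_partials by (meson le_trans)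
qed

lemma norm_fst_le_norm: "norm (fst z) \<le> norm z"
  using norm_fst_le[of "fst z" "snd z"] by simp

lemma norm_snd_le_norm: "norm (snd z) \<le> norm z"
  by (metis norm_snd_le prod.collapse)

lemma order_boundedI:
  assumes "\<delta> > 0" "0 \<le> C"
    "\<And>z. z \<in> U \<Longrightarrow> norm z < \<delta> \<Longrightarrow> fst z \<noteq> 0 \<Longrightarrow> norm (fst z) powr (- m) * norm (f z) \<le> C"
  shows "order_bounded U m f"
proof -
  have "\<forall>z\<in>U. norm z < \<delta> \<longrightarrow> norm (fst z) powr (- m) * norm (f z) \<le> C"
  proof (intro ballI impI)
    fix z assume "z \<in> U" "norm z < \<delta>"
    then show "norm (fst z) powr (- m) * norm (f z) \<le> C"
      using assms by (cases "fst z = 0") auto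
  qed
  then show ?thesis unfolding order_bounded_def using assms(1) by blast
qed

lemma order_boundedE:
  assumes "order_bounded U m f"
  obtains \<delta> C where "\<delta> > 0" "0 \<le> C"
    "\<And>z. z \<in> U \<Longrightarrow> norm z < \<delta> \<Longrightarrow> norm (fst z) powr (- m) * norm (f z) \<le> C"
proof -
  obtain \<delta> C where "\<delta> > 0" "\<forall>z\<in>U. norm z < \<delta> \<longrightarrow> norm (fst z) powr (- m) * norm (f z) \<le> C"
    using assms unfolding order_bounded_def by blast
  then show ?thesis using that[of \<delta> "max C 0"] by force
qed

lemma order_bounded_mono:
  assumes "m' \<le> m" "order_bounded U m f"
  shows "order_bounded U m' f"
proof -
  obtain \<delta> C where d: "\<delta> > 0" and C: "\<forall>z\<in>U. norm z < \<delta> \<longrightarrow> norm (fst z) powr (- m) * norm (f z) \<le> C"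
    using assms(2) unfolding order_bounded_def by blast
  have "\<forall>z\<in>U. norm z < min \<delta> 1 \<longrightarrow> norm (fst z) powr (- m') * norm (f z) \<le> max C 0"
  proof (intro ballI impI)
    fix z assume z: "z \<in> U" "norm z < min \<delta> 1"
    have x1: "norm (fst z) < 1" using z norm_fst_le_norm[of z] by linarith
    show "norm (fst z) powr (- m') * norm (f z) \<le> max C 0"
    proof (cases "fst z = 0")
      case True then show ?thesis by simp
    next
      case False
      have "norm (fst z) powr (- m') = norm (fst z) powr (m - m') * norm (fst z) powr (- m)"
        by (simp add: powr_add[symmetric])
      also have "norm (fst z) powr (m - m') \<le> 1"
        using x1 assms(1) False by (simp add: powr_le1)
      ultimately have "norm (fst z) powr (- m') * norm (f z) \<le> norm (fst z) powr (- m) * norm (f z)"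
        by (simp add: mult.assoc mult_left_le_one_le)
      then show ?thesis using C z by force
    qed
  qed
  then show ?thesis unfolding order_bounded_def using d by (intro exI[of _ "min \<delta> 1"]) auto
qed

lemma order_on_mono_exponent:
  assumes "m' \<le> m" "order_on b U m q f" shows "order_on b U m' q f"
  unfolding order_on_iff_partials
proof (intro allI impI ballI)
  fix k g assume "k \<le> q" "g \<in> partials k f"
  then have "g differentiable_on U \<and> (b \<longrightarrow> order_bounded U (m - real k) g)"
    using assms(2) unfolding order_on_iff_partials by blast
  moreover have "m' - real k \<le> m - real k" using assms(1) by simp
  ultimately show "g differentiable_on U \<and> (b \<longrightarrow> order_bounded U (m' - real k) g)"
    using order_bounded_mono by blast
qed

lemma partial_deriv_at: "(f has_derivative f') (at z) \<Longrightarrow> partial_deriv f i z = f' i"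
  unfolding partial_deriv_def using frechet_derivative_at by metis

lemma differentiable_on_has_derivative:
  "open U \<Longrightarrow> f differentiable_on U \<Longrightarrow> z \<in> U \<Longrightarrow> (f has_derivative frechet_derivative f (at z)) (at z)"
  using differentiable_on_eq_differentiable_at frechet_derivative_works by blast

lemma order_on_zero: "open U \<Longrightarrow> order_on b U m q (\<lambda>z. 0)"
proof (induction q arbitrary: m)
  case 0 then show ?case by (simp add: order_bounded_def) (use zero_less_one in blast)
next
  case (Suc q)
  show ?case
    by (rule order_on_SucI[OF Suc.prems])
      (auto simp: order_bounded_def partial_deriv_def intro: Suc.IH[OF Suc.prems] exI[of _ 1])
qed

lemma order_bounded_of_bounded:
  assumes "m \<le> 0" "\<delta> > 0" "\<And>z. z \<in> U \<Longrightarrow> norm z < \<delta> \<Longrightarrow> norm (f z) \<le> K"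
  shows "order_bounded U m f"
proof (rule order_boundedI[of "min \<delta> 1" "max K 0"])
  fix z assume z: "z \<in> U" "norm z < min \<delta> 1" "fst z \<noteq> 0"
  have x1: "norm (fst z) < 1" using z norm_fst_le_norm[of z] by linarith
  have "norm (fst z) powr (- m) \<le> 1" using x1 assms(1) by (simp add: powr_le1)
  moreover have "norm (f z) \<le> max K 0" using assms(3)[of z] z by force
  ultimately show "norm (fst z) powr (- m) * norm (f z) \<le> max K 0"
    by (meson mult_le_one norm_ge_zero order.trans mult_left_le_one_le powr_ge_zero)
qed (use assms in auto)

lemma order_on_const: "open U \<Longrightarrow> m \<le> 0 \<Longrightarrow> order_on b U m q (\<lambda>z. c)"
proof (cases q)
  case 0
  assume "open U" "m \<le> 0"
  then show ?thesis using 0 order_bounded_of_bounded[of m 1 U "\<lambda>z. c" "norm c"] by auto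
next
  case (Suc q')
  assume U: "open U" and m: "m \<le> 0"
  show ?thesis unfolding Suc
    by (rule order_on_SucI[OF U])
      (use order_bounded_of_bounded[of m 1 U "\<lambda>z. c" "norm c"] m order_on_zero[OF U] in
        \<open>auto simp: partial_deriv_def intro!: exI[of _ "\<lambda>z. 0"]\<close>)
qed

lemma order_bounded_add:
  assumes "order_bounded U m f" "order_bounded U m g" shows "order_bounded U m (\<lambda>z. f z + g z)"
proof -
  obtain d1 C1 where 1: "d1 > 0" "0 \<le> C1" "\<And>z. z \<in> U \<Longrightarrow> norm z < d1 \<Longrightarrow> norm (fst z) powr (- m) * norm (f z) \<le> C1"
    using assms(1) by (rule order_boundedE) blast
  obtain d2 C2 where 2: "d2 > 0" "0 \<le> C2" "\<And>z. z \<in> U \<Longrightarrow> norm z < d2 \<Longrightarrow> norm (fst z) powr (- m) * norm (g z) \<le> C2"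
    using assms(2) by (rule order_boundedE) blast
  show ?thesis
  proof (rule order_boundedI[of "min d1 d2" "C1 + C2"])
    fix z assume z: "z \<in> U" "norm z < min d1 d2"
    have "norm (fst z) powr (- m) * norm (f z + g z)
        \<le> norm (fst z) powr (- m) * norm (f z) + norm (fst z) powr (- m) * norm (g z)"
      by (metis distrib_left mult_left_mono norm_triangle_ineq powr_ge_zero)
    also have "\<dots> \<le> C1 + C2" using 1(3)[of z] 2(3)[of z] z by auto
    finally show "norm (fst z) powr (- m) * norm (f z + g z) \<le> C1 + C2" .
  qed (use 1 2 in auto)
qed

lemma order_on_add:
  fixes f g :: "'n::finite pt \<Rightarrow> 'b::real_normed_vector"
  assumes U: "open U"
  shows "order_on b U m q f \<Longrightarrow> order_on b U m q g \<Longrightarrow> order_on b U m q (\<lambda>z. f z + g z)"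
proof (induction q arbitrary: m f g)
  case 0 then show ?case using order_bounded_add by (auto intro: differentiable_on_add)
next
  case (Suc q)
  have df: "f differentiable_on U" and dg: "g differentiable_on U" using Suc.prems by auto
  show ?case
  proof (rule order_on_SucI[OF U])
    show "(\<lambda>z. f z + g z) differentiable_on U" using df dg by (rule differentiable_on_add)
    show "b \<Longrightarrow> order_bounded U m (\<lambda>z. f z + g z)" using Suc.prems order_bounded_add by auto
    fix i :: "'n pt" assume i: "i \<in> Basis"
    have "\<forall>z\<in>U. partial_deriv (\<lambda>z. f z + g z) i z = partial_deriv f i z + partial_deriv g i z"
      using partial_deriv_at[OF has_derivative_add[OF differentiable_on_has_derivative[OF U df]
          differentiable_on_has_derivative[OF U dg]]]
      by (simp add: partial_deriv_def)
    moreover have "order_on b U (m-1) q (\<lambda>z. partial_deriv f i z + partial_deriv g i z)"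
      using Suc.IH Suc.prems i by auto
    ultimately show "\<exists>h. (\<forall>z\<in>U. partial_deriv (\<lambda>z. f z + g z) i z = h z) \<and> order_on b U (m - 1) q h"
      by (intro exI[of _ "\<lambda>z. partial_deriv f i z + partial_deriv g i z"]) auto
  qed
qed

lemma order_bounded_linear:
  assumes L: "bounded_linear L" and "order_bounded U m f" shows "order_bounded U m (\<lambda>z. L (f z))"
proof -
  obtain K where K: "K > 0" "\<And>x. norm (L x) \<le> norm x * K" using bounded_linear.pos_bounded[OF L] by blast
  obtain d1 C1 where 1: "d1 > 0" "0 \<le> C1" "\<And>z. z \<in> U \<Longrightarrow> norm z < d1 \<Longrightarrow> norm (fst z) powr (- m) * norm (f z) \<le> C1"
    using assms(2) by (rule order_boundedE) blast
  show ?thesis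
  proof (rule order_boundedI[of d1 "C1 * K"])
    fix z assume z: "z \<in> U" "norm z < d1"
    have "norm (fst z) powr (- m) * norm (L (f z)) \<le> norm (fst z) powr (- m) * (norm (f z) * K)"
      using K by (simp add: mult_left_mono)
    also have "\<dots> \<le> C1 * K" using 1(3)[OF z] K by (simp add: mult.assoc[symmetric])
    finally show "norm (fst z) powr (- m) * norm (L (f z)) \<le> C1 * K" .
  qed (use 1 K in auto)
qed

lemma differentiable_onI: "open U \<Longrightarrow> (\<And>z. z \<in> U \<Longrightarrow> f differentiable at z) \<Longrightarrow> f differentiable_on U"
  using differentiable_on_eq_differentiable_at by blast

lemma order_on_linear:
  fixes f :: "'n::finite pt \<Rightarrow> 'b::real_normed_vector" and L :: "'b \<Rightarrow> 'c::real_normed_vector"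
  assumes U: "open U" and L: "bounded_linear L"
  shows "order_on b U m q f \<Longrightarrow> order_on b U m q (\<lambda>z. L (f z))"
proof (induction q arbitrary: m f)
  case 0
  have "f differentiable_on U" using 0 by auto
  then have "(\<lambda>z. L (f z)) differentiable_on U"
    by (rule differentiable_on_compose[OF _ bounded_linear_imp_differentiable_on[OF L]])
  then show ?case using order_bounded_linear[OF L] 0 by auto
next
  case (Suc q)
  have df: "f differentiable_on U" using Suc.prems by auto
  show ?case
  proof (rule order_on_SucI[OF U])
    show "(\<lambda>z. L (f z)) differentiable_on U"
      by (rule differentiable_on_compose[OF df bounded_linear_imp_differentiable_on[OF L]])
    show "b \<Longrightarrow> order_bounded U m (\<lambda>z. L (f z))" using Suc.prems order_bounded_linear[OF L] by auto
    fix i :: "'n pt" assume i: "i \<in> Basis"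
    have "\<forall>z\<in>U. partial_deriv (\<lambda>z. L (f z)) i z = L (partial_deriv f i z)"
      using partial_deriv_at[OF bounded_linear.has_derivative[OF L differentiable_on_has_derivative[OF U df]]]
      by (simp add: partial_deriv_def)
    moreover have "order_on b U (m-1) q (\<lambda>z. L (partial_deriv f i z))"
      using Suc.IH Suc.prems i by auto
    ultimately show "\<exists>h. (\<forall>z\<in>U. partial_deriv (\<lambda>z. L (f z)) i z = h z) \<and> order_on b U (m - 1) q h"
      by (intro exI[of _ "\<lambda>z. L (partial_deriv f i z)"]) auto
  qed
qed

lemma order_on_uminus: "open U \<Longrightarrow> order_on b U m q f \<Longrightarrow> order_on b U m q (\<lambda>z. - f z)"
  using order_on_linear[of U uminus] bounded_linear_minus[OF bounded_linear_ident] by auto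

lemma order_on_diff: "open U \<Longrightarrow> order_on b U m q f \<Longrightarrow> order_on b U m q g \<Longrightarrow> order_on b U m q (\<lambda>z. f z - g z)"
  using order_on_add[of U b m q f "\<lambda>z. - g z"] order_on_uminus[of U b m q g] by simp

lemma order_on_sum:
  assumes U: "open U" and A: "finite A"
  shows "(\<And>a. a \<in> A \<Longrightarrow> order_on b U m q (f a)) \<Longrightarrow> order_on b U m q (\<lambda>z. \<Sum>a\<in>A. f a z)"
  using A
proof (induction A rule: finite_induct)
  case empty then show ?case using order_on_zero[OF U] by simp
next
  case (insert a A)
  then show ?case using order_on_add[OF U, of b m q "f a" "\<lambda>z. \<Sum>a\<in>A. f a z"] by simp
qed

lemma order_bounded_bilinear:
  assumes P: "bounded_bilinear P" and "order_bounded U m f" "order_bounded U m' g"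
  shows "order_bounded U (m + m') (\<lambda>z. P (f z) (g z))"
proof -
  obtain K where K: "K > 0" "\<And>a b. norm (P a b) \<le> norm a * norm b * K" using bounded_bilinear.pos_bounded[OF P] by blast
  obtain d1 C1 where 1: "d1 > 0" "0 \<le> C1" "\<And>z. z \<in> U \<Longrightarrow> norm z < d1 \<Longrightarrow> norm (fst z) powr (- m) * norm (f z) \<le> C1"
    using assms(2) by (rule order_boundedE) blast
  obtain d2 C2 where 2: "d2 > 0" "0 \<le> C2" "\<And>z. z \<in> U \<Longrightarrow> norm z < d2 \<Longrightarrow> norm (fst z) powr (- m') * norm (g z) \<le> C2"
    using assms(3) by (rule order_boundedE) blast
  show ?thesis
  proof (rule order_boundedI[of "min d1 d2" "C1 * C2 * K"])
    fix z assume z: "z \<in> U" "norm z < min d1 d2" "fst z \<noteq> 0"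
    have e: "norm (fst z) powr (- (m + m')) = norm (fst z) powr (- m) * norm (fst z) powr (- m')"
      by (simp add: powr_add[symmetric])
    have "norm (fst z) powr (- (m + m')) * norm (P (f z) (g z))
        \<le> norm (fst z) powr (- (m + m')) * (norm (f z) * norm (g z) * K)"
      using K by (simp add: mult_left_mono)
    also have "\<dots> = (norm (fst z) powr (- m) * norm (f z)) * (norm (fst z) powr (- m') * norm (g z)) * K"
      unfolding e by (simp add: algebra_simps)
    also have "\<dots> \<le> C1 * C2 * K"
      using 1(3)[of z] 2(3)[of z] z K 1(2) 2(2) by (intro mult_right_mono mult_mono) auto
    finally show "norm (fst z) powr (- (m + m')) * norm (P (f z) (g z)) \<le> C1 * C2 * K" .
  qed (use 1 2 K in auto)
qed

lemma order_on_bilinear: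
  fixes f :: "'n::finite pt \<Rightarrow> 'a::real_normed_vector" and g :: "'n pt \<Rightarrow> 'b::real_normed_vector"
    and P :: "'a \<Rightarrow> 'b \<Rightarrow> 'c::real_normed_vector"
  assumes U: "open U" and P: "bounded_bilinear P"
  shows "order_on b U m q f \<Longrightarrow> order_on b U m' q g \<Longrightarrow> order_on b U (m + m') q (\<lambda>z. P (f z) (g z))"
proof (induction q arbitrary: m m' f g)
  case 0
  have df: "f differentiable_on U" and dg: "g differentiable_on U" using 0 by auto
  have "(\<lambda>z. P (f z) (g z)) differentiable_on U"
    using bounded_bilinear.FDERIV[OF P differentiable_on_has_derivative[OF U df]
        differentiable_on_has_derivative[OF U dg]]
      by (intro differentiable_onI[OF U] differentiableI) blast
  then show ?case using order_bounded_bilinear[OF P] 0 by auto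
next
  case (Suc q)
  have df: "f differentiable_on U" and dg: "g differentiable_on U" using Suc.prems by auto
  show ?case
  proof (rule order_on_SucI[OF U])
    show "(\<lambda>z. P (f z) (g z)) differentiable_on U"
      using bounded_bilinear.FDERIV[OF P differentiable_on_has_derivative[OF U df]
        differentiable_on_has_derivative[OF U dg]]
      by (intro differentiable_onI[OF U] differentiableI) blast
    show "b \<Longrightarrow> order_bounded U (m + m') (\<lambda>z. P (f z) (g z))" using Suc.prems order_bounded_bilinear[OF P] by auto
    fix i :: "'n pt" assume i: "i \<in> Basis"
    have "\<forall>z\<in>U. partial_deriv (\<lambda>z. P (f z) (g z)) i z = P (f z) (partial_deriv g i z) + P (partial_deriv f i z) (g z)"
      using partial_deriv_at[OF bounded_bilinear.FDERIV[OF P differentiable_on_has_derivative[OF U df]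
          differentiable_on_has_derivative[OF U dg]]]
      by (simp add: partial_deriv_def)
    moreover have "order_on b U (m + m' - 1) q (\<lambda>z. P (f z) (partial_deriv g i z) + P (partial_deriv f i z) (g z))"
    proof (rule order_on_add[OF U])
      have "order_on b U m q f" "order_on b U (m'-1) q (partial_deriv g i)"
        using Suc.prems i order_on_mono_degree[of q "Suc q"] by auto
      then have "order_on b U (m + (m' - 1)) q (\<lambda>z. P (f z) (partial_deriv g i z))" by (rule Suc.IH)
      then show "order_on b U (m + m' - 1) q (\<lambda>z. P (f z) (partial_deriv g i z))" by (simp add: algebra_simps)
      have "order_on b U m' q g" "order_on b U (m-1) q (partial_deriv f i)"
        using Suc.prems i order_on_mono_degree[of q "Suc q"] by auto
      then have "order_on b U ((m - 1) + m') q (\<lambda>z. P (partial_deriv f i z) (g z))" using Suc.IH by blast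
      then show "order_on b U (m + m' - 1) q (\<lambda>z. P (partial_deriv f i z) (g z))" by (simp add: algebra_simps)
    qed
    ultimately show "\<exists>h. (\<forall>z\<in>U. partial_deriv (\<lambda>z. P (f z) (g z)) i z = h z) \<and> order_on b U (m + m' - 1) q h"
      by (intro exI[of _ "\<lambda>z. P (f z) (partial_deriv g i z) + P (partial_deriv f i z) (g z)"]) auto
  qed
qed

lemma linear_basis_expand:
  fixes L :: "'a::euclidean_space \<Rightarrow> 'b::real_normed_vector"
  assumes "linear L"
  shows "L v = (\<Sum>j\<in>Basis. (v \<bullet> j) *\<^sub>R L j)"
proof -
  have "L v = L (\<Sum>j\<in>Basis. (v \<bullet> j) *\<^sub>R j)" by (simp add: euclidean_representation)
  also have "\<dots> = (\<Sum>j\<in>Basis. (v \<bullet> j) *\<^sub>R L j)"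
    by (simp add: linear_sum[OF assms] linear_scale[OF assms])
  finally show ?thesis .
qed

lemma frechet_derivative_expand:
  assumes "f differentiable at w"
  shows "frechet_derivative f (at w) v = (\<Sum>j\<in>Basis. (v \<bullet> j) *\<^sub>R partial_deriv f j w)"
  unfolding partial_deriv_def by (rule linear_basis_expand[OF linear_frechet_derivative[OF assms]])

lemma partial_deriv_comp:
  assumes "G differentiable at z" "h differentiable at (G z)"
  shows "partial_deriv (\<lambda>z. h (G z)) i z = frechet_derivative h (at (G z)) (partial_deriv G i z)"
proof -
  have "((\<lambda>z. h (G z)) has_derivative (frechet_derivative h (at (G z)) \<circ> frechet_derivative G (at z))) (at z)"
    using diff_chain_at[OF frechet_derivative_works[THEN iffD1, OF assms(1)]
        frechet_derivative_works[THEN iffD1, OF assms(2)]]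
    by (simp add: o_def)
  from partial_deriv_at[OF this] show ?thesis by (simp add: partial_deriv_def)
qed

lemma partial_deriv_add_id:
  assumes "(\<lambda>z. G z - z) differentiable at z"
  shows "partial_deriv G i z = i + partial_deriv (\<lambda>z. G z - z) i z"
proof -
  have e: "(\<lambda>z. z + (G z - z)) = G" by simp
  have "((\<lambda>z. z + (G z - z)) has_derivative (\<lambda>v. v + frechet_derivative (\<lambda>z. G z - z) (at z) v)) (at z)"
    by (intro has_derivative_add has_derivative_ident frechet_derivative_works[THEN iffD1, OF assms])
  then have "(G has_derivative (\<lambda>v. v + frechet_derivative (\<lambda>z. G z - z) (at z) v)) (at z)"
    unfolding e .
  from partial_deriv_at[OF this] show ?thesis by (simp add: partial_deriv_def)
qed

locale x_preserving_map =
  fixes U U' :: "'n::finite pt set" and G :: "'n pt \<Rightarrow> 'n pt" and K :: real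
  assumes open_U: "open U" and open_U': "open U'"
    and maps_into: "\<And>z. z \<in> U' \<Longrightarrow> G z \<in> U"
    and fst_eq: "\<And>z. z \<in> U' \<Longrightarrow> fst (G z) = fst z"
    and norm_le: "\<And>z. z \<in> U' \<Longrightarrow> norm (G z) \<le> K * norm z"
begin

lemma order_bounded_comp:
  assumes "order_bounded U m h" shows "order_bounded U' m (\<lambda>z. h (G z))"
proof -
  obtain d C where d: "d > 0" "0 \<le> C"
    and C: "\<And>z. z \<in> U \<Longrightarrow> norm z < d \<Longrightarrow> norm (fst z) powr (- m) * norm (h z) \<le> C"
    using assms by (rule order_boundedE) blast
  show ?thesis
  proof (rule order_boundedI[of "d / (\<bar>K\<bar> + 1)" C])
    fix z assume z: "z \<in> U'" "norm z < d / (\<bar>K\<bar> + 1)"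
    have "norm (G z) \<le> \<bar>K\<bar> * norm z"
      using norm_le[OF z(1)] mult_right_mono[OF abs_ge_self norm_ge_zero, of K z] by linarith
    also have "\<dots> \<le> (\<bar>K\<bar> + 1) * norm z" by (simp add: distrib_right)
    also have "\<dots> < d"
    proof -
      have "0 < \<bar>K\<bar> + 1" by simp
      with z(2) show ?thesis by (simp only: mult.commute[of "\<bar>K\<bar> + 1"] pos_less_divide_eq[symmetric])
    qed
    finally show "norm (fst z) powr (- m) * norm (h (G z)) \<le> C"
      using C[OF maps_into[OF z(1)]] fst_eq[OF z(1)] by simp
  qed (use d in auto)
qed

lemma comp_differentiable_on:
  "G differentiable_on U' \<Longrightarrow> h differentiable_on U \<Longrightarrow> (\<lambda>z. h (G z)) differentiable_on U'"
  by (metis differentiable_on_compose differentiable_on_subset image_subsetI maps_into)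

lemma order_on_comp:
  fixes h :: "'n pt \<Rightarrow> 'b::real_normed_vector"
  assumes "1 \<le> \<beta>" and \<psi>: "order_on b U' \<beta> q (\<lambda>z. G z - z)"
  shows "order_on b U m q h \<Longrightarrow> order_on b U' m q (\<lambda>z. h (G z))"
  using \<psi>
proof (induction q arbitrary: m h)
  case 0
  have "G differentiable_on U'"
    using differentiable_on_add[OF order_on_differentiable[OF 0(2)] differentiable_on_id[unfolded id_def]] by simp
  then show ?case using comp_differentiable_on order_bounded_comp 0 by auto
next
  case (Suc q)
  have d\<psi>: "(\<lambda>z. G z - z) differentiable_on U'" using Suc(3) by auto
  then have dG: "G differentiable_on U'"
    using differentiable_on_add[OF _ differentiable_on_id[unfolded id_def]] by fastforce
  have dh: "h differentiable_on U" using Suc by simp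
  show ?case
  proof (rule order_on_SucI[OF open_U'])
    show "(\<lambda>z. h (G z)) differentiable_on U'" using comp_differentiable_on[OF dG dh] .
    show "b \<Longrightarrow> order_bounded U' m (\<lambda>z. h (G z))" using Suc.prems order_bounded_comp by auto
    fix i :: "'n pt" assume i: "i \<in> Basis"
    let ?F = "\<lambda>z. \<Sum>j\<in>Basis. ((i \<bullet> j) + partial_deriv (\<lambda>z. G z - z) i z \<bullet> j) *\<^sub>R partial_deriv h j (G z)"
    have "partial_deriv (\<lambda>z. h (G z)) i z = ?F z" if z: "z \<in> U'" for z
    proof -
      have dGz: "G differentiable at z" and d\<psi>z: "(\<lambda>z. G z - z) differentiable at z"
        using dG d\<psi> z open_U' differentiable_on_eq_differentiable_at by blast+
      have dhz: "h differentiable at (G z)"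
        using dh maps_into[OF z] open_U differentiable_on_eq_differentiable_at by blast
      have "partial_deriv (\<lambda>z. h (G z)) i z
          = frechet_derivative h (at (G z)) (i + partial_deriv (\<lambda>z. G z - z) i z)"
        unfolding partial_deriv_comp[OF dGz dhz] partial_deriv_add_id[OF d\<psi>z] ..
      also have "\<dots> = ?F z"
        by (simp add: frechet_derivative_expand[OF dhz] inner_add_left)
      finally show ?thesis .
    qed
    moreover have "order_on b U' (m-1) q ?F"
    proof (rule order_on_sum[OF open_U'], simp)
      fix j :: "'n pt" assume j: "j \<in> Basis"
      have "order_on b U' (\<beta> - 1) q (partial_deriv (\<lambda>z. G z - z) i)" using Suc(3) i by auto
      then have "order_on b U' (\<beta> - 1) q (\<lambda>z. partial_deriv (\<lambda>z. G z - z) i z \<bullet> j)"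
        by (rule order_on_linear[OF open_U' bounded_linear_inner_left])
      then have \<psi>j: "order_on b U' 0 q (\<lambda>z. partial_deriv (\<lambda>z. G z - z) i z \<bullet> j)"
        by (rule order_on_mono_exponent[rotated]) (use assms(1) in simp)
      have c: "order_on b U' 0 q (\<lambda>z. (i \<bullet> j) + partial_deriv (\<lambda>z. G z - z) i z \<bullet> j)"
        by (rule order_on_add[OF open_U' order_on_const[OF open_U'] \<psi>j]) simp
      have "order_on b U' (m-1) q (\<lambda>z. partial_deriv h j (G z))"
        using Suc.IH[of "m-1" "partial_deriv h j"] Suc.prems j order_on_mono_degree[of q "Suc q"] by auto
      then have "order_on b U' (0 + (m-1)) q (\<lambda>z. ((i \<bullet> j) + partial_deriv (\<lambda>z. G z - z) i z \<bullet> j) *\<^sub>R partial_deriv h j (G z))"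
        by (rule order_on_bilinear[OF open_U' bounded_bilinear_scaleR c])
      then show "order_on b U' (m-1) q (\<lambda>z. ((i \<bullet> j) + partial_deriv (\<lambda>z. G z - z) i z \<bullet> j) *\<^sub>R partial_deriv h j (G z))"
        by simp
    qed
    ultimately show "\<exists>h'. (\<forall>z\<in>U'. partial_deriv (\<lambda>z. h (G z)) i z = h' z) \<and> order_on b U' (m - 1) q h'"
      by (intro exI[of _ ?F]) auto
  qed
qed

end

lemma norm_sum_inner_scaleR_le:
  fixes v :: "'a::euclidean_space" and c :: "'a \<Rightarrow> 'b::real_normed_vector"
  shows "norm (\<Sum>j\<in>Basis. (v \<bullet> j) *\<^sub>R c j) \<le> norm v * (\<Sum>j\<in>Basis. norm (c j))"
proof -
  have "norm (\<Sum>j\<in>Basis. (v \<bullet> j) *\<^sub>R c j) \<le> (\<Sum>j\<in>Basis. norm ((v \<bullet> j) *\<^sub>R c j))"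
    by (rule norm_sum)
  also have "\<dots> \<le> (\<Sum>j\<in>Basis. norm v * norm (c j))"
    by (intro sum_mono) (simp add: Basis_le_norm mult_right_mono)
  finally show ?thesis by (simp add: sum_distrib_left)
qed

lemma order_bounded_absorb:
  fixes v a :: "'n::finite pt \<Rightarrow> 'n pt" and c :: "'n pt \<Rightarrow> 'n pt \<Rightarrow> 'n pt"
  assumes "order_bounded U m a" "\<delta>0 > 0"
    and small: "\<And>z. z \<in> U \<Longrightarrow> norm z < \<delta>0 \<Longrightarrow> (\<Sum>j\<in>Basis. norm (c j z)) \<le> 1/2"
    and eq: "\<And>z. z \<in> U \<Longrightarrow> v z = a z + (\<Sum>j\<in>Basis. (v z \<bullet> j) *\<^sub>R c j z)"
  shows "order_bounded U m v"
proof -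
  obtain d C where d: "d > 0" "0 \<le> C"
    and C: "\<And>z. z \<in> U \<Longrightarrow> norm z < d \<Longrightarrow> norm (fst z) powr (- m) * norm (a z) \<le> C"
    using assms(1) by (rule order_boundedE) blast
  show ?thesis
  proof (rule order_boundedI[of "min d \<delta>0" "2 * C"])
    fix z assume z: "z \<in> U" "norm z < min d \<delta>0"
    have c: "(\<Sum>j\<in>Basis. norm (c j z)) \<le> 1/2" using small z by simp
    have "norm (v z) \<le> norm (a z) + norm (\<Sum>j\<in>Basis. (v z \<bullet> j) *\<^sub>R c j z)"
      using eq[OF z(1)] by (metis norm_triangle_ineq)
    also have "\<dots> \<le> norm (a z) + norm (v z) * (1/2)"
      using order_trans[OF norm_sum_inner_scaleR_le mult_left_mono[OF c norm_ge_zero]] by simp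
    finally have "norm (v z) \<le> 2 * norm (a z)" by simp
    then have "norm (fst z) powr (- m) * norm (v z) \<le> 2 * (norm (fst z) powr (- m) * norm (a z))"
      by (metis mult.left_commute mult_left_mono powr_ge_zero)
    also have "\<dots> \<le> 2 * C" using C[of z] z by simp
    finally show "norm (fst z) powr (- m) * norm (v z) \<le> 2 * C" .
  qed (use d assms(2) in auto)
qed

lemma partial_deriv_absorb_eq:
  fixes v a :: "'n::finite pt \<Rightarrow> 'n pt" and c :: "'n pt \<Rightarrow> 'n pt \<Rightarrow> 'n pt"
  assumes U: "open U" and "v differentiable_on U" "a differentiable_on U"
    and "\<And>j. j \<in> Basis \<Longrightarrow> c j differentiable_on U"
    and eq: "\<And>z. z \<in> U \<Longrightarrow> v z = a z + (\<Sum>j\<in>Basis. (v z \<bullet> j) *\<^sub>R c j z)"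
    and z: "z \<in> U"
  shows "partial_deriv v k z
    = (partial_deriv a k z + (\<Sum>j\<in>Basis. (v z \<bullet> j) *\<^sub>R partial_deriv (c j) k z))
      + (\<Sum>j\<in>Basis. (partial_deriv v k z \<bullet> j) *\<^sub>R c j z)"
proof -
  let ?R = "\<lambda>z. a z + (\<Sum>j\<in>Basis. (v z \<bullet> j) *\<^sub>R c j z)"
  have "(?R has_derivative (\<lambda>h. frechet_derivative a (at z) h + (\<Sum>j\<in>Basis.
          (v z \<bullet> j) *\<^sub>R frechet_derivative (c j) (at z) h + (frechet_derivative v (at z) h \<bullet> j) *\<^sub>R c j z))) (at z)"
    using assms(2-4)
    by (intro has_derivative_add has_derivative_sum has_derivative_scaleR
        bounded_linear.has_derivative[OF bounded_linear_inner_left] differentiable_on_has_derivative[OF U _ z])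
      auto
  from partial_deriv_at[OF this, of k]
  have "partial_deriv ?R k z = (partial_deriv a k z + (\<Sum>j\<in>Basis. (v z \<bullet> j) *\<^sub>R partial_deriv (c j) k z))
      + (\<Sum>j\<in>Basis. (partial_deriv v k z \<bullet> j) *\<^sub>R c j z)"
    by (simp add: partial_deriv_def sum.distrib algebra_simps)
  moreover have "partial_deriv v k z = partial_deriv ?R k z"
    by (rule partial_deriv_cong[OF U _ assms(2) z]) (use eq in auto)
  ultimately show ?thesis by simp
qed

text \<open>If \<open>v = a + \<Sum>\<^sub>j (v \<bullet> e\<^sub>j) c\<^sub>j\<close> with \<open>\<Sum>\<^sub>j |c\<^sub>j| \<le> 1/2\<close>, then \<open>|v| \<le> 2|a|\<close>; differentiating the identity
  reproduces it for \<open>\<partial>\<^sub>kv\<close> with a new inhomogeneous term, so \<open>v\<close> inherits the order of \<open>a\<close>.\<close>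
lemma order_on_absorb:
  fixes v a :: "'n::finite pt \<Rightarrow> 'n pt" and c :: "'n pt \<Rightarrow> 'n pt \<Rightarrow> 'n pt"
  assumes U: "open U"
    and c: "\<And>j. j \<in> Basis \<Longrightarrow> order_on b U 0 q (c j)"
    and small: "\<delta>0 > 0" "\<And>z. z \<in> U \<Longrightarrow> norm z < \<delta>0 \<Longrightarrow> (\<Sum>j\<in>Basis. norm (c j z)) \<le> 1/2"
  shows "order_on b U m q a \<Longrightarrow> (\<And>q'. order_on False U m q' v) \<Longrightarrow>
         (\<And>z. z \<in> U \<Longrightarrow> v z = a z + (\<Sum>j\<in>Basis. (v z \<bullet> j) *\<^sub>R c j z)) \<Longrightarrow> order_on b U m q v"
  using c
proof (induction q arbitrary: m a v)
  case 0
  have "order_bounded U m v" if b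
    using order_bounded_absorb[OF _ small 0(3)] 0(1) that by simp
  then show ?case using 0(2)[of 0] by simp
next
  case (Suc q)
  have cq: "order_on b U 0 q (c j)" if "j \<in> Basis" for j
    using order_on_mono_degree[OF _ Suc.prems(4)[OF that], of q] by simp
  have vq: "order_on b U m q v"
    by (rule Suc.IH[of m a v, OF order_on_mono_degree[OF _ Suc.prems(1)] Suc.prems(2) Suc.prems(3) cq]) auto
  have dv: "v differentiable_on U" using Suc.prems(2)[of 0] by simp
  show ?case
  proof (rule order_on_SucI[OF U dv])
    show "b \<Longrightarrow> order_bounded U m v" using vq by (cases q) auto
    fix k :: "'n pt" assume k: "k \<in> Basis"
    let ?a' = "\<lambda>z. partial_deriv a k z + (\<Sum>j\<in>Basis. (v z \<bullet> j) *\<^sub>R partial_deriv (c j) k z)"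
    have a': "order_on b U (m - 1) q ?a'"
    proof (rule order_on_add[OF U])
      show "order_on b U (m - 1) q (partial_deriv a k)" using Suc.prems(1) k by auto
      show "order_on b U (m - 1) q (\<lambda>z. \<Sum>j\<in>Basis. (v z \<bullet> j) *\<^sub>R partial_deriv (c j) k z)"
      proof (rule order_on_sum[OF U], simp)
        fix j :: "'n pt" assume j: "j \<in> Basis"
        have "order_on b U m q (\<lambda>z. v z \<bullet> j)" by (rule order_on_linear[OF U bounded_linear_inner_left vq])
        moreover have "order_on b U (0 - 1) q (partial_deriv (c j) k)" using Suc.prems(4)[OF j] k by auto
        ultimately have "order_on b U (m + (0 - 1)) q (\<lambda>z. (v z \<bullet> j) *\<^sub>R partial_deriv (c j) k z)"
          by (rule order_on_bilinear[OF U bounded_bilinear_scaleR])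
        then show "order_on b U (m - 1) q (\<lambda>z. (v z \<bullet> j) *\<^sub>R partial_deriv (c j) k z)" by simp
      qed
    qed
    have "order_on b U (m - 1) q (partial_deriv v k)"
    proof (rule Suc.IH[OF a'])
      show "order_on False U (m - 1) q' (partial_deriv v k)" for q'
        using Suc.prems(2)[of "Suc q'"] k by auto
      show "partial_deriv v k z = ?a' z + (\<Sum>j\<in>Basis. (partial_deriv v k z \<bullet> j) *\<^sub>R c j z)" if "z \<in> U" for z
        using partial_deriv_absorb_eq[OF U dv _ _ Suc.prems(3) that] Suc.prems(1,4) order_on_differentiable
        by blast
    qed (use cq in auto)
    then show "\<exists>h. (\<forall>z\<in>U. partial_deriv v k z = h z) \<and> order_on b U (m - 1) q h" by blast
  qed
qed

lemma smooth_on_subset: "S' \<subseteq> S \<Longrightarrow> smooth_on S f \<Longrightarrow> smooth_on S' f"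
  unfolding smooth_on_def using differentiable_on_subset by blast

lemma order_on_False_exponent: "order_on False U m q f \<Longrightarrow> order_on False U m' q f"
  unfolding order_on_iff_partials by simp

lemma order_on_id: "open U \<Longrightarrow> order_on False U m q (\<lambda>z. z)"
proof (cases q)
  case 0 then show ?thesis by simp
next
  case (Suc q')
  assume U: "open U"
  show ?thesis unfolding Suc
  proof (rule order_on_SucI[OF U])
    show "(\<lambda>z. z) differentiable_on U" by simp
    fix i :: "'a pt" assume "i \<in> Basis"
    have "order_on False U (m - 1) q' (\<lambda>z. i)" using order_on_const[OF U, of 0] order_on_False_exponent by blast
    then show "\<exists>h. (\<forall>z\<in>U. partial_deriv (\<lambda>z. z) i z = h z) \<and> order_on False U (m - 1) q' h"
      by (intro exI[of _ "\<lambda>z. i"]) (auto simp: partial_deriv_def)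
  qed simp
qed

lemma smooth_on_cong:
  fixes f g :: "'n::finite pt \<Rightarrow> 'b::real_normed_vector"
  shows "open U \<Longrightarrow> (\<And>z. z \<in> U \<Longrightarrow> f z = g z) \<Longrightarrow> smooth_on U f \<Longrightarrow> smooth_on U g"
  using smooth_on_iff_order_on[of U f 0] smooth_on_iff_order_on[of U g 0] order_on_cong by metis

lemma order_bounded_norm: "order_bounded U m f \<Longrightarrow> order_bounded U m (\<lambda>z. norm (f z))"
  unfolding order_bounded_def by simp

lemma order_bounded_sum_norm:
  assumes "finite A"
  shows "(\<And>i. i \<in> A \<Longrightarrow> order_bounded U m (f i)) \<Longrightarrow> order_bounded U m (\<lambda>z. \<Sum>i\<in>A. norm (f i z))"
  using assms
proof (induction A rule: finite_induct)
  case empty then show ?case by (simp add: order_bounded_def) (use zero_less_one in blast)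
next
  case (insert a A)
  then show ?case using order_bounded_add[OF order_bounded_norm, of U m "f a" "\<lambda>z. \<Sum>i\<in>A. norm (f i z)"] by simp
qed

lemma powr_neg_mult_le_imp_le:
  fixes x :: real
  assumes "x > 0" "x powr (- m) * s \<le> C"
  shows "s \<le> C * x powr m"
proof -
  have "s = x powr m * (x powr (- m) * s)"
    using assms(1) by (simp add: mult.assoc[symmetric] powr_add[symmetric])
  also have "\<dots> \<le> x powr m * C" using assms by (intro mult_left_mono) auto
  finally show ?thesis by (simp add: mult.commute)
qed

lemma open_Vdom:
  assumes "b \<le> pi"
  shows "open (Vdom a b r1 r2 :: 'n::finite pt set)"
proof -
  define S where "S = {x::complex. x \<noteq> 0 \<and> (if a = - pi \<and> b = pi then True else a < Arg x \<and> Arg x < b) \<and> norm x < r1}"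
  have V: "(Vdom a b r1 r2 :: 'n pt set) = S \<times> ball 0 r2" by (auto simp: Vdom_def S_def)
  have "open S"
  proof (cases "a = - pi \<and> b = pi")
    case True
    then have "S = ball 0 r1 - {0}" by (auto simp: S_def)
    then show ?thesis by (simp add: open_Diff)
  next
    case False
    have "S = (Arg -` {a<..<b} \<inter> - \<real>\<^sub>\<le>\<^sub>0) \<inter> ball 0 r1"
    proof (intro equalityI subsetI)
      fix x assume x: "x \<in> S"
      have "x \<notin> \<real>\<^sub>\<le>\<^sub>0"
      proof
        assume "x \<in> \<real>\<^sub>\<le>\<^sub>0"
        then have "Re x \<le> 0" "Im x = 0" by (auto simp: complex_nonpos_Reals_iff)
        moreover have "x \<noteq> 0" using x by (auto simp: S_def)
        ultimately have "Re x < 0" by (metis complex_eq_iff order_le_less zero_complex.simps)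
        then have "Arg x = pi" using \<open>Im x = 0\<close> by (simp add: Arg_eq_pi)
        then show False using x False assms by (auto simp: S_def)
      qed
      then show "x \<in> (Arg -` {a<..<b} \<inter> - \<real>\<^sub>\<le>\<^sub>0) \<inter> ball 0 r1" using x False by (auto simp: S_def)
    next
      fix x assume x: "x \<in> (Arg -` {a<..<b} \<inter> - \<real>\<^sub>\<le>\<^sub>0) \<inter> ball 0 r1"
      then have "x \<noteq> 0" by auto
      then show "x \<in> S" using x False by (auto simp: S_def)
    qed
    moreover have "open (Arg -` {a<..<b} \<inter> - \<real>\<^sub>\<le>\<^sub>0)"
    proof -
      have o: "open (- \<real>\<^sub>\<le>\<^sub>0 :: complex set)" by (simp add: open_Compl)
      show ?thesis using continuous_on_open_vimage[OF o, of Arg] continuous_on_Arg open_greaterThanLessThan by blast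
    qed
    ultimately show ?thesis by auto
  qed
  then show ?thesis unfolding V by (intro open_Times) auto
qed

lemma fibre_lipschitz:
  fixes \<phi> :: "'n::finite pt \<Rightarrow> 'n pt" and x :: complex
  assumes D: "open D" and d\<phi>: "\<phi> differentiable_on D"
    and inD: "\<And>y. norm y \<le> \<rho> \<Longrightarrow> (x, y) \<in> D"
    and N: "\<And>y. norm y \<le> \<rho> \<Longrightarrow> (\<Sum>i\<in>Basis. norm (partial_deriv \<phi> i (x, y))) \<le> 1/2"
    and "norm y1 \<le> \<rho>" "norm y2 \<le> \<rho>"
  shows "norm (snd (\<phi> (x, y1)) - snd (\<phi> (x, y2))) \<le> 1/2 * norm (y1 - y2)"
proof (rule differentiable_bound[of "cball 0 \<rho>" "\<lambda>y. snd (\<phi> (x, y))"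
      "\<lambda>y v. snd (frechet_derivative \<phi> (at (x, y)) (0, v))"])
  fix y :: "complex ^ 'n" assume y: "y \<in> cball 0 \<rho>"
  have xy: "(x, y) \<in> D" using y inD by simp
  have "((\<lambda>y. (x, y)) has_derivative (\<lambda>v. (0, v))) (at y within cball 0 \<rho>)"
    by (intro has_derivative_Pair has_derivative_const has_derivative_ident)
  moreover have "(\<phi> has_derivative frechet_derivative \<phi> (at (x, y))) (at (x, y))"
    by (rule differentiable_on_has_derivative[OF D d\<phi> xy])
  ultimately have "((\<lambda>y. \<phi> (x, y)) has_derivative (\<lambda>v. frechet_derivative \<phi> (at (x, y)) (0, v)))
      (at y within cball 0 \<rho>)"
    using has_derivative_in_compose[of "\<lambda>y. (x, y)" _ y "cball 0 \<rho>" \<phi>]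
    by (simp add: o_def has_derivative_at_withinI)
  then show "((\<lambda>y. snd (\<phi> (x, y))) has_derivative (\<lambda>v. snd (frechet_derivative \<phi> (at (x, y)) (0, v))))
      (at y within cball 0 \<rho>)"
    by (rule has_derivative_snd)
  show "onorm (\<lambda>v. snd (frechet_derivative \<phi> (at (x, y)) (0, v))) \<le> 1/2"
  proof (rule onorm_le)
    fix v :: "complex ^ 'n"
    have dxy: "\<phi> differentiable at (x, y)" using d\<phi> D xy differentiable_on_eq_differentiable_at by blast
    have "norm (snd (frechet_derivative \<phi> (at (x, y)) (0, v))) \<le> norm (frechet_derivative \<phi> (at (x, y)) (0, v))"
      by (rule norm_snd_le_norm)
    also have "\<dots> = norm (\<Sum>j\<in>Basis. ((0, v) \<bullet> j) *\<^sub>R partial_deriv \<phi> j (x, y))"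
      by (simp add: frechet_derivative_expand[OF dxy])
    also have "\<dots> \<le> norm ((0::complex, v)) * (\<Sum>j\<in>Basis. norm (partial_deriv \<phi> j (x, y)))"
      by (rule norm_sum_inner_scaleR_le)
    also have "\<dots> \<le> norm v * (1/2)"
      using N[of y] y by (intro mult_mono) (auto simp: norm_Pair sum_nonneg)
    finally show "norm (snd (frechet_derivative \<phi> (at (x, y)) (0, v))) \<le> 1/2 * norm v" by simp
  qed
qed (use assms in auto)

lemma fibre_equation_solvable:
  fixes \<phi> :: "'n::finite pt \<Rightarrow> 'n pt" and x :: complex and y' :: "complex ^ 'n"
  assumes D: "open D" and d\<phi>: "\<phi> differentiable_on D"
    and \<rho>: "\<rho> > 0" and inD: "\<And>y. norm y \<le> \<rho> \<Longrightarrow> (x, y) \<in> D"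
    and N: "\<And>y. norm y \<le> \<rho> \<Longrightarrow> (\<Sum>i\<in>Basis. norm (partial_deriv \<phi> i (x, y))) \<le> 1/2"
    and B: "\<And>y. norm y \<le> \<rho> \<Longrightarrow> norm (\<phi> (x, y)) \<le> \<rho>/2"
    and y': "norm y' \<le> \<rho>/2"
  shows "\<exists>y. norm y \<le> \<rho> \<and> y + snd (\<phi> (x, y)) = y'"
proof -
  define T where "T y = y' - snd (\<phi> (x, y))" for y
  have "\<exists>!y\<in>cball 0 \<rho>. T y = y"
  proof (rule Banach_fix[of "cball 0 \<rho>" "1/2"])
    show "T ` cball 0 \<rho> \<subseteq> cball 0 \<rho>"
    proof
      fix z assume "z \<in> T ` cball 0 \<rho>"
      then obtain y where y: "norm y \<le> \<rho>" "z = T y" by auto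
      have "norm (snd (\<phi> (x, y))) \<le> \<rho>/2" using B[OF y(1)] norm_snd_le_norm[of "\<phi> (x, y)"] by simp
      then have "norm (T y) \<le> \<rho>" using y' norm_triangle_ineq4[of y' "snd (\<phi> (x, y))"] by (simp add: T_def)
      then show "z \<in> cball 0 \<rho>" using y by simp
    qed
    fix y1 y2 :: "complex ^ 'n" assume "y1 \<in> cball 0 \<rho>" "y2 \<in> cball 0 \<rho>"
    then have "norm y1 \<le> \<rho>" "norm y2 \<le> \<rho>" by auto
    from fibre_lipschitz[OF D d\<phi> inD N this]
    show "dist (T y1) (T y2) \<le> 1/2 * dist y1 y2" by (simp add: T_def dist_norm norm_minus_commute)
  qed (use \<rho> in \<open>auto simp: complete_eq_closed\<close>)
  then obtain y where "norm y \<le> \<rho>" "T y = y" by auto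
  then show ?thesis by (intro exI[of _ y]) (auto simp: T_def algebra_simps)
qed

lemma smooth_on_minus_id:
  fixes G :: "'n::finite pt \<Rightarrow> 'n pt"
  assumes "open U" "smooth_on U G"
  shows "smooth_on U (\<lambda>z. G z - z)"
  using assms order_on_diff[OF assms(1)] order_on_id[OF assms(1)]
  unfolding smooth_on_iff_order_on[where m=0] by blast

lemma order_bounded_le_powr:
  assumes "order_bounded U m f"
  obtains \<delta> C where "\<delta> > 0" "0 \<le> C"
    "\<And>z. z \<in> U \<Longrightarrow> norm z < \<delta> \<Longrightarrow> fst z \<noteq> 0 \<Longrightarrow> norm (f z) \<le> C * norm (fst z) powr m"
proof -
  obtain \<delta> C where "\<delta> > 0" "0 \<le> C"
    and C: "\<And>z. z \<in> U \<Longrightarrow> norm z < \<delta> \<Longrightarrow> norm (fst z) powr (- m) * norm (f z) \<le> C"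
    using assms by (rule order_boundedE) blast
  show thesis
  proof (rule that[OF \<open>\<delta> > 0\<close> \<open>0 \<le> C\<close>])
    fix z assume "z \<in> U" "norm z < \<delta>" "fst z \<noteq> 0"
    then show "norm (f z) \<le> C * norm (fst z) powr m"
      using powr_neg_mult_le_imp_le[OF _ C] by simp
  qed
qed

lemma order_bounded_eventually_small:
  assumes "0 < m" "order_bounded U m f" "0 < \<epsilon>"
  obtains \<delta> where "\<delta> > 0" "\<And>z. z \<in> U \<Longrightarrow> norm z < \<delta> \<Longrightarrow> fst z \<noteq> 0 \<Longrightarrow> norm (f z) \<le> \<epsilon>"
proof -
  obtain \<delta> C where \<delta>: "\<delta> > 0" "0 \<le> C"
    and C: "\<And>z. z \<in> U \<Longrightarrow> norm z < \<delta> \<Longrightarrow> fst z \<noteq> 0 \<Longrightarrow> norm (f z) \<le> C * norm (fst z) powr m"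
    using assms(2) by (rule order_bounded_le_powr) blast
  define t where "t = (\<epsilon> / (C + 1)) powr (1 / m)"
  have t: "t > 0" "t powr m = \<epsilon> / (C + 1)"
    using assms(1,3) \<delta>(2) by (simp_all add: t_def powr_powr)
  have "norm (f z) \<le> \<epsilon>" if z: "z \<in> U" "norm z < min \<delta> t" "fst z \<noteq> 0" for z
  proof -
    have "norm (fst z) < t" using z(2) norm_fst_le_norm[of z] by linarith
    then have "norm (fst z) powr m < \<epsilon> / (C + 1)"
      using powr_less_mono2[OF assms(1) norm_ge_zero] t(2) by metis
    moreover have "0 < C + 1" using \<delta>(2) by simp
    ultimately have "norm (fst z) powr m * (C + 1) < \<epsilon>"
      by (simp only: pos_less_divide_eq[symmetric])
    then have "C * norm (fst z) powr m + norm (fst z) powr m < \<epsilon>" by (simp add: algebra_simps)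
    then have "C * norm (fst z) powr m \<le> \<epsilon>" using powr_ge_zero[of "norm (fst z)" m] by linarith
    then show ?thesis using C[OF z(1) _ z(3)] z(2) by force
  qed
  then show thesis using that[of "min \<delta> t"] \<delta>(1) t(1) by force
qed

lemma order_bounded_le_linear:
  assumes "1 \<le> m" "order_bounded U m f"
  obtains \<delta> C where "\<delta> > 0" "0 \<le> C"
    "\<And>z. z \<in> U \<Longrightarrow> norm z < \<delta> \<Longrightarrow> fst z \<noteq> 0 \<Longrightarrow> norm (f z) \<le> C * norm (fst z)"
proof -
  obtain \<delta> C where "\<delta> > 0" "0 \<le> C"
    and C: "\<And>z. z \<in> U \<Longrightarrow> norm z < \<delta> \<Longrightarrow> fst z \<noteq> 0 \<Longrightarrow> norm (f z) \<le> C * norm (fst z) powr 1"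
    using order_bounded_le_powr[OF order_bounded_mono[OF assms]] by blast
  show thesis
    by (rule that[OF \<open>\<delta> > 0\<close> \<open>0 \<le> C\<close>]) (use C in simp)
qed

lemma order_on_near_identity_estimates:
  fixes \<phi> :: "'n::finite pt \<Rightarrow> 'b::real_normed_vector"
  assumes "1 < \<beta>" "order_on True D \<beta> (Suc p) \<phi>"
  obtains \<delta> C where "0 < \<delta>" "0 \<le> C"
    "\<And>z. z \<in> D \<Longrightarrow> norm z < \<delta> \<Longrightarrow> fst z \<noteq> 0 \<Longrightarrow>
       (\<Sum>i\<in>Basis. norm (partial_deriv \<phi> i z)) \<le> 1/2 \<and> norm (\<phi> z) \<le> C * norm (fst z)"
proof -
  have "order_bounded D (\<beta> - 1) (\<lambda>z. \<Sum>i\<in>Basis. norm (partial_deriv \<phi> i z))"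
    using order_bounded_sum_norm[OF finite_Basis] order_on_bounded order_on_partial assms(2) by blast
  then obtain \<delta>0 where \<delta>0: "\<delta>0 > 0" and small:
    "\<And>z. z \<in> D \<Longrightarrow> norm z < \<delta>0 \<Longrightarrow> fst z \<noteq> 0 \<Longrightarrow> norm (\<Sum>i\<in>Basis. norm (partial_deriv \<phi> i z)) \<le> 1/2"
    using order_bounded_eventually_small[of "\<beta> - 1"] assms(1) by (metis diff_gt_0_iff_gt half_gt_zero zero_less_one)
  obtain \<delta>1 C where "\<delta>1 > 0" "0 \<le> C"
    and lin: "\<And>z. z \<in> D \<Longrightarrow> norm z < \<delta>1 \<Longrightarrow> fst z \<noteq> 0 \<Longrightarrow> norm (\<phi> z) \<le> C * norm (fst z)"
    using order_bounded_le_linear[OF _ order_on_bounded[OF assms(2)]] assms(1) by auto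
  show thesis
  proof (rule that[of "min \<delta>0 \<delta>1" C])
    fix z assume "z \<in> D" "norm z < min \<delta>0 \<delta>1" "fst z \<noteq> 0"
    then show "(\<Sum>i\<in>Basis. norm (partial_deriv \<phi> i z)) \<le> 1/2 \<and> norm (\<phi> z) \<le> C * norm (fst z)"
      using small lin by (simp add: sum_nonneg)
  qed (use \<delta>0 \<open>\<delta>1 > 0\<close> \<open>0 \<le> C\<close> in auto)
qed

lemma Vdom_subset_image_add:
  fixes \<phi> :: "'n::finite pt \<Rightarrow> 'n pt"
  assumes "b \<le> pi" "0 < r1" "0 < r2" "0 < \<delta>" "0 \<le> C"
    and d\<phi>: "\<phi> differentiable_on Vdom a b r1 r2"
    and fst_\<phi>: "\<And>z. z \<in> Vdom a b r1 r2 \<Longrightarrow> fst (\<phi> z) = 0"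
    and est: "\<And>z. z \<in> Vdom a b r1 r2 \<Longrightarrow> norm z < \<delta> \<Longrightarrow>
               (\<Sum>i\<in>Basis. norm (partial_deriv \<phi> i z)) \<le> 1/2 \<and> norm (\<phi> z) \<le> C * norm (fst z)"
  obtains r1' r2' where "0 < r1'" "0 < r2'"
    "\<And>z. z \<in> Vdom a b r1' r2' \<Longrightarrow> \<exists>w\<in>Vdom a b r1 r2. norm w < \<delta> \<and> w + \<phi> w = z"
proof -
  define \<rho> where "\<rho> = min \<delta> r2 / 4"
  define r1' where "r1' = min r1 (\<rho> / (2 * C + 1))"
  have \<rho>: "0 < \<rho>" "\<rho> < r2" "2 * \<rho> < \<delta>" using assms(3,4) by (auto simp: \<rho>_def)
  have r1': "0 < r1'" "r1' \<le> r1" "r1' \<le> \<rho>" "C * r1' \<le> \<rho> / 2"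
  proof -
    have "C * r1' \<le> C * (\<rho> / (2 * C + 1))" by (rule mult_left_mono) (simp_all add: r1'_def assms(5))
    also have "\<dots> \<le> \<rho> / 2" using assms(5) \<rho>(1) by (simp add: field_simps)
    finally show "C * r1' \<le> \<rho> / 2" .
    show "r1' \<le> \<rho>" using assms(5) \<rho>(1) by (simp add: r1'_def min_le_iff_disj field_simps)
  qed (use assms(2,5) \<rho> in \<open>auto simp: r1'_def\<close>)
  have "\<exists>w\<in>Vdom a b r1 r2. norm w < \<delta> \<and> w + \<phi> w = z" if z: "z \<in> Vdom a b r1' (\<rho> / 2)" for z
  proof -
    obtain x y' where zxy: "z = (x, y')" by (cases z)
    have x: "norm x < r1'" and y': "norm y' \<le> \<rho> / 2" using z by (auto simp: Vdom_def zxy)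
    have inV: "(x, y) \<in> Vdom a b r1 r2" if "norm y \<le> \<rho>" for y :: "complex ^ 'n"
      using z that r1' \<rho> by (auto simp: Vdom_def zxy)
    have small: "norm (x, y) < \<delta>" if "norm y \<le> \<rho>" for y :: "complex ^ 'n"
      using norm_Pair_le[of x y] x that r1'(3) \<rho>(3) by linarith
    have "C * norm x \<le> C * r1'" using x assms(5) by (simp add: mult_left_mono)
    then have "C * norm x \<le> \<rho> / 2" using r1'(4) by linarith
    then have N: "(\<Sum>i\<in>Basis. norm (partial_deriv \<phi> i (x, y))) \<le> 1/2"
      and B: "norm (\<phi> (x, y)) \<le> \<rho> / 2" if "norm y \<le> \<rho>" for y
      using est[OF inV[OF that] small[OF that]] by auto
    obtain y where y: "norm y \<le> \<rho>" "y + snd (\<phi> (x, y)) = y'"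
      using fibre_equation_solvable[OF open_Vdom[OF assms(1)] d\<phi> \<rho>(1) inV N B y'] by blast
    have "(x, y) + \<phi> (x, y) = z"
      using fst_\<phi>[OF inV[OF y(1)]] y(2) by (simp add: zxy prod_eq_iff)
    then show ?thesis using inV[OF y(1)] small[OF y(1)] by blast
  qed
  then show thesis using that[of r1' "\<rho> / 2"] r1'(1) \<rho>(1) by auto
qed

text \<open>With \<open>\<psi> = G - id = -\<phi> \<circ> G\<close>, the chain rule gives \<open>D\<psi> = -(D\<phi> \<circ> G)(I + D\<psi>)\<close>: the partials of
  \<open>\<psi>\<close> reappear on the right, with small coefficients \<open>-\<partial>\<^sub>j\<phi> \<circ> G\<close>.\<close>
lemma partial_deriv_inverse_eq:
  fixes \<phi> G :: "'n::finite pt \<Rightarrow> 'n pt"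
  assumes "open D" "open D'" "\<phi> differentiable_on D" "G differentiable_on D'"
    and maps: "\<And>z. z \<in> D' \<Longrightarrow> G z \<in> D" and inverse: "\<And>z. z \<in> D' \<Longrightarrow> G z + \<phi> (G z) = z"
    and z: "z \<in> D'"
  shows "partial_deriv (\<lambda>z. G z - z) i z
       = - partial_deriv \<phi> i (G z) + (\<Sum>j\<in>Basis. (partial_deriv (\<lambda>z. G z - z) i z \<bullet> j) *\<^sub>R - partial_deriv \<phi> j (G z))"
proof -
  have dGz: "G differentiable at z" using assms(2,4) z differentiable_on_eq_differentiable_at by blast
  have d\<psi>z: "(\<lambda>z. G z - z) differentiable at z" using dGz by (intro differentiable_diff) auto
  have d\<phi>G: "\<phi> differentiable at (G z)" using assms(1,3) maps[OF z] differentiable_on_eq_differentiable_at by blast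
  have hd: "((\<lambda>w. - \<phi> w) has_derivative (\<lambda>h. - frechet_derivative \<phi> (at (G z)) h)) (at (G z))"
    by (intro has_derivative_minus frechet_derivative_works[THEN iffD1, OF d\<phi>G])
  have \<psi>_eq: "G w - w = - \<phi> (G w)" if "w \<in> D'" for w
  proof -
    have "w = G w + \<phi> (G w)" using inverse[OF that] by simp
    then show ?thesis by (simp add: algebra_simps)
  qed
  have d\<psi>: "(\<lambda>z. G z - z) differentiable_on D'"
    using differentiable_on_diff[OF assms(4) differentiable_on_id] by (simp add: id_def)
  have "partial_deriv (\<lambda>z. G z - z) i z = partial_deriv (\<lambda>z. - \<phi> (G z)) i z"
    by (rule partial_deriv_cong[OF assms(2) \<psi>_eq d\<psi> z])
  also have "\<dots> = - frechet_derivative \<phi> (at (G z)) (i + partial_deriv (\<lambda>z. G z - z) i z)"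
    using partial_deriv_comp[OF dGz differentiableI[OF hd]]
    by (simp add: partial_deriv_add_id[OF d\<psi>z] frechet_derivative_at[OF hd, symmetric])
  also have "\<dots> = - (partial_deriv \<phi> i (G z) + frechet_derivative \<phi> (at (G z)) (partial_deriv (\<lambda>z. G z - z) i z))"
    using linear_add[OF linear_frechet_derivative[OF d\<phi>G]] by (simp add: partial_deriv_def)
  also have "\<dots> = - partial_deriv \<phi> i (G z)
      + (\<Sum>j\<in>Basis. (partial_deriv (\<lambda>z. G z - z) i z \<bullet> j) *\<^sub>R - partial_deriv \<phi> j (G z))"
    by (simp add: frechet_derivative_expand[OF d\<phi>G] sum_negf)
  finally show ?thesis .
qed

lemma (in x_preserving_map) order_on_inverse:
  fixes \<phi> :: "'n pt \<Rightarrow> 'n pt"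
  assumes \<beta>: "1 \<le> \<beta>" and \<phi>: "order_on True U \<beta> p \<phi>"
    and smooth: "smooth_on U' G"
    and inverse: "\<And>z. z \<in> U' \<Longrightarrow> G z + \<phi> (G z) = z"
    and small: "\<And>z. z \<in> U' \<Longrightarrow> (\<Sum>j\<in>Basis. norm (partial_deriv \<phi> j (G z))) \<le> 1/2"
  shows "order_on True U' \<beta> p (\<lambda>z. G z - z)"
proof -
  have \<psi>_smooth: "order_on False U' \<beta> q (\<lambda>z. G z - z)" for q
    using smooth_on_minus_id[OF open_U' smooth] smooth_on_iff_order_on by blast
  have dG: "G differentiable_on U'"
    using smooth smooth_on_iff_order_on[of U' G 0] order_on_differentiable by blast
  have "order_bounded U' \<beta> (\<lambda>z. - \<phi> (G z))"
    using order_bounded_comp[OF order_on_bounded[OF \<phi>]] by (simp add: order_bounded_def)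
  then have \<psi>_bounded: "order_bounded U' \<beta> (\<lambda>z. G z - z)"
    by (rule order_bounded_cong[rotated]) (use inverse in \<open>force simp: algebra_simps\<close>)
  have \<psi>_partial: "partial_deriv (\<lambda>z. G z - z) i z
      = - partial_deriv \<phi> i (G z) + (\<Sum>j\<in>Basis. (partial_deriv (\<lambda>z. G z - z) i z \<bullet> j) *\<^sub>R - partial_deriv \<phi> j (G z))"
    if "z \<in> U'" for z i
    using partial_deriv_inverse_eq[OF open_U open_U' order_on_differentiable[OF \<phi>] dG maps_into inverse that] .
  show ?thesis
    using \<phi>
  proof (induction p)
    case 0 then show ?case using \<psi>_smooth[of 0] \<psi>_bounded by simp
  next
    case (Suc q)
    have IH: "order_on True U' \<beta> q (\<lambda>z. G z - z)"
      by (rule Suc.IH[OF order_on_mono_degree[OF _ Suc.prems]]) simp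
    have c: "order_on True U' (\<beta> - 1) q (\<lambda>z. - partial_deriv \<phi> j (G z))" if "j \<in> Basis" for j
      using order_on_uminus[OF open_U' order_on_comp[OF \<beta> IH order_on_partial[OF Suc.prems that]]] .
    show ?case
    proof (rule order_on_SucI[OF open_U'])
      show "(\<lambda>z. G z - z) differentiable_on U'" using \<psi>_smooth[of 0] by simp
      show "True \<Longrightarrow> order_bounded U' \<beta> (\<lambda>z. G z - z)" using \<psi>_bounded .
      fix i :: "'n pt" assume i: "i \<in> Basis"
      have "order_on True U' (\<beta> - 1) q (partial_deriv (\<lambda>z. G z - z) i)"
      proof (rule order_on_absorb[where a = "\<lambda>z. - partial_deriv \<phi> i (G z)"
            and c = "\<lambda>j z. - partial_deriv \<phi> j (G z)", OF open_U' _ zero_less_one])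
        show "\<And>j. j \<in> Basis \<Longrightarrow> order_on True U' 0 q (\<lambda>z. - partial_deriv \<phi> j (G z))"
          using order_on_mono_exponent c \<beta> by (metis diff_ge_0_iff_ge)
        show "order_on False U' (\<beta> - 1) q' (partial_deriv (\<lambda>z. G z - z) i)" for q'
          using \<psi>_smooth[of "Suc q'"] i by simp
      qed (use c i small \<psi>_partial in auto)
      then show "\<exists>h. (\<forall>z\<in>U'. partial_deriv (\<lambda>z. G z - z) i z = h z) \<and> order_on True U' (\<beta> - 1) q h"
        by blast
    qed
  qed
qed

lemma smooth_diffeo_inv_into:
  fixes F :: "'n::finite pt \<Rightarrow> 'n pt"
  assumes "smooth_diffeo D W F" "open D" "open D'" "D' \<subseteq> W"
  shows "smooth_diffeo D' (inv_into D F ` D') (inv_into D F)"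
proof -
  define G where "G = inv_into D F"
  have W: "W = F ` D" "inj_on F D" "smooth_on D F" "smooth_on W G"
    using assms(1) by (auto simp: smooth_diffeo_def G_def)
  have G: "G z \<in> D" "F (G z) = z" if "z \<in> D'" for z
    using that assms(4) W(1) by (auto simp: G_def inv_into_into f_inv_into_f)
  have inj: "inj_on G D'" unfolding G_def using assms(4) W(1) by (blast intro: inj_on_inv_into)
  have "G ` D' = D \<inter> F -` D'"
    using G W(2) by (auto simp: G_def image_iff) (metis inv_into_f_f)
  moreover have "continuous_on D F"
    using W(3) smooth_on_iff_order_on[of D F 0]
    by (metis order_on_differentiable differentiable_imp_continuous_on)
  ultimately have "open (G ` D')"
    using assms(2,3) continuous_on_open_vimage Int_commute by metis
  moreover have "smooth_on (G ` D') (inv_into D' G)"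
  proof (rule smooth_on_cong[OF \<open>open (G ` D')\<close> _ smooth_on_subset[OF _ W(3)]])
    show "G ` D' \<subseteq> D" using G by blast
    show "F w = inv_into D' G w" if "w \<in> G ` D'" for w
      using that inv_into_f_f[OF inj] G by auto
  qed
  ultimately show ?thesis
    unfolding smooth_diffeo_def G_def[symmetric] using inj smooth_on_subset[OF assms(4) W(4)] by blast
qed

lemma D_class_inv_into:
  fixes F :: "'n::finite pt \<Rightarrow> 'n pt"
  assumes F: "D_class \<beta> p D F" and "open D" "open D'" "1 \<le> \<beta>" "0 \<le> C"
    and est: "\<And>z. z \<in> D \<Longrightarrow> norm z < \<delta> \<Longrightarrow>
      (\<Sum>i\<in>Basis. norm (partial_deriv (\<lambda>z. F z - z) i z)) \<le> 1/2 \<and> norm (F z - z) \<le> C * norm (fst z)"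
    and cover: "\<And>z. z \<in> D' \<Longrightarrow> \<exists>w\<in>D. norm w < \<delta> \<and> F w = z"
  shows "D' \<subseteq> F ` D" "D_class \<beta> p D' (inv_into D F)"
proof -
  define G where "G = inv_into D F"
  obtain W where diffeo: "smooth_diffeo D W F" and Ffst: "\<And>z. z \<in> D \<Longrightarrow> fst (F z) = fst z"
    and order: "of_order D \<beta> p (\<lambda>z. F z - z)"
    using F unfolding D_class_def by blast
  have inj: "inj_on F D" and W: "W = F ` D" using diffeo by (auto simp: smooth_diffeo_def)
  show sub: "D' \<subseteq> F ` D" using cover by blast
  have G: "G z \<in> D" "F (G z) = z" "norm (G z) < \<delta>" if "z \<in> D'" for z
    using cover[OF that] inj by (auto simp: G_def)
  have Gfst: "fst (G z) = fst z" if "z \<in> D'" for z using Ffst G[OF that] by metis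
  have "norm (G z) \<le> (1 + C) * norm z" if "z \<in> D'" for z
  proof -
    have "norm (G z) \<le> norm z + norm (F (G z) - G z)"
      using G(2)[OF that] norm_triangle_ineq4[of z "F (G z) - G z"] by simp
    also have "\<dots> \<le> norm z + C * norm (fst z)"
      using est[OF G(1,3)[OF that]] Gfst[OF that] by simp
    also have "\<dots> \<le> norm z + C * norm z"
      using mult_left_mono[OF norm_fst_le_norm assms(5)] by simp
    finally show ?thesis by (simp add: algebra_simps)
  qed
  then interpret x_preserving_map D D' G "1 + C"
    using assms(2,3) G(1) Gfst by unfold_locales auto
  have diffeo': "smooth_diffeo D' (G ` D') G"
    unfolding G_def using smooth_diffeo_inv_into[OF diffeo assms(2,3)] sub W by blast
  then have smooth: "smooth_on D' G" by (simp add: smooth_diffeo_def)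
  have "order_on True D' \<beta> p (\<lambda>z. G z - z)"
  proof (rule order_on_inverse[where \<phi>="\<lambda>z. F z - z", OF assms(4) _ smooth])
    show "order_on True D \<beta> p (\<lambda>z. F z - z)" using order of_order_iff_order_on by blast
    show "G z + (F (G z) - G z) = z" if "z \<in> D'" for z using G(2)[OF that] by simp
    show "(\<Sum>j\<in>Basis. norm (partial_deriv (\<lambda>z. F z - z) j (G z))) \<le> 1/2" if "z \<in> D'" for z
      using est[OF G(1,3)[OF that]] by simp
  qed
  then show "D_class \<beta> p D' (inv_into D F)"
    unfolding D_class_def G_def[symmetric] of_order_iff_order_on
    using diffeo' Gfst smooth_on_minus_id[OF assms(3) smooth] by blast
qed

theorem proposition7p10:
  fixes a b r1 r2 \<beta> :: real and p :: nat
    and F :: "'n::finite pt \<Rightarrow> 'n pt"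
  assumes "- pi \<le> a" "a < b" "b \<le> pi" "r1 > 0" "r2 > 0"
    and "\<beta> > 1" "p \<ge> 1"
    and "D_class \<beta> p (Vdom a b r1 r2) F"
  shows "\<exists>r1' r2'. r1' > 0 \<and> r2' > 0 \<and>
           Vdom a b r1' r2' \<subseteq> F ` Vdom a b r1 r2 \<and>
           D_class \<beta> p (Vdom a b r1' r2') (inv_into (Vdom a b r1 r2) F)"
proof -
  define D where "D = (Vdom a b r1 r2 :: 'n pt set)"
  obtain p' where "p = Suc p'" using assms(7) by (cases p) auto
  obtain W where "smooth_diffeo D W F" and Ffst: "\<And>z. z \<in> D \<Longrightarrow> fst (F z) = fst z"
    and "of_order D \<beta> p (\<lambda>z. F z - z)"
    using assms(8) unfolding D_class_def D_def by blast
  then have \<phi>: "order_on True D \<beta> (Suc p') (\<lambda>z. F z - z)"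
    using of_order_iff_order_on \<open>p = Suc p'\<close> by blast
  then obtain \<delta> C where "0 < \<delta>" "0 \<le> C" and est: "\<And>z. z \<in> D \<Longrightarrow> norm z < \<delta> \<Longrightarrow> fst z \<noteq> 0 \<Longrightarrow>
      (\<Sum>i\<in>Basis. norm (partial_deriv (\<lambda>z. F z - z) i z)) \<le> 1/2 \<and> norm (F z - z) \<le> C * norm (fst z)"
    using order_on_near_identity_estimates assms(6) by blast
  have est_D: "(\<Sum>i\<in>Basis. norm (partial_deriv (\<lambda>z. F z - z) i z)) \<le> 1/2 \<and> norm (F z - z) \<le> C * norm (fst z)"
    if "z \<in> D" "norm z < \<delta>" for z
    using est that by (auto simp: D_def Vdom_def)
  obtain r1' r2' where "0 < r1'" "0 < r2'"
    and cover: "\<And>z. z \<in> Vdom a b r1' r2' \<Longrightarrow> \<exists>w\<in>D. norm w < \<delta> \<and> F w = z"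
    using Vdom_subset_image_add[OF assms(3,4,5) \<open>0 < \<delta>\<close> \<open>0 \<le> C\<close> order_on_differentiable[OF \<phi>, unfolded D_def]]
      est_D Ffst unfolding D_def by auto
  have "open D" "open (Vdom a b r1' r2' :: 'n pt set)" using open_Vdom[OF assms(3)] by (auto simp: D_def)
  with cover have "Vdom a b r1' r2' \<subseteq> F ` D" "D_class \<beta> p (Vdom a b r1' r2') (inv_into D F)"
    using D_class_inv_into[where \<delta>=\<delta>, OF assms(8)[folded D_def] _ _ _ \<open>0 \<le> C\<close> est_D] assms(6) by auto
  then show ?thesis using \<open>0 < r1'\<close> \<open>0 < r2'\<close> unfolding D_def by blast
qed

end
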